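(* Let $\Omega\subset\mathbb{R}^N$ be an open domain, let $g:\mathbb{R}^N\setminus\Omega\to\mathbb{R}$ be bounded, and let $\mathcal{A}:\Omega\times\mathcal{X}\times\mathbb{R}\to\mathbb{R}$ satisfy assumptions (a), (b), (c) below. Consider the DPP with boundary values $$\mathcal{A}(x,u,u(x))=0 \ (x\in\Omega),\qquad u(x)=g(x)\ (x\in\mathbb{R}^N\setminus\Omega). \tag{DPP}$$ Assume that either (H1) there exists at least one viscosity subsolution of (DPP), and (H2) all viscosity subsolutions of (DPP) are uniformly bounded from above (i.e. there is $M\in\mathbb{R}$ with $v\le M$ on $\mathbb{R}^N$ for every viscosity subsolution $v$); or (H1* ) there exists at least one viscosity supersolution of (DPP), and (H2* ) all viscosity supersolutions of (DPP) are uniformly bounded from below. Then there exists at least one viscosity solution of (DPP).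
   Context: $\overline{\mathcal{X}}$ denotes the set of bounded functions $f:\mathbb{R}^N\to\mathbb{R}$, and $\mathcal{X}\subset\overline{\mathcal{X}}$ is a fixed subset. Assumptions on $\mathcal{A}$: (a) $\mathcal{A}$ is nonincreasing in the second variable: for all $(x,s)$ and all $\varphi_1,\varphi_2\in\mathcal{X}$ with $\varphi_1\le\varphi_2$ on $\mathbb{R}^N$, $\mathcal{A}(x,\varphi_2,s)\le\mathcal{A}(x,\varphi_1,s)$; (b) $\mathcal{A}$ is nondecreasing in the third variable: for all $(x,\varphi)$ and $s_1\le s_2$, $\mathcal{A}(x,\varphi,s_1)\le\mathcal{A}(x,\varphi,s_2)$; (c) for every $(x,\varphi)$ the map $s\mapsto\mathcal{A}(x,\varphi,s)$ has exactly one zero. Viscosity solutions of (DPP): $u\in\overline{\mathcal{X}}$ is a viscosity supersolution if $u(x)\ge g(x)$ for all $x\in\mathbb{R}^N\setminus\Omega$ and, for every $x\in\Omega$, $\mathcal{A}(x,\varphi,u(x))\ge0$ for all $\varphi\in\mathcal{X}$ with $\varphi\le u$ on $\mathbb{R}^N$. $u\in\overline{\mathcal{X}}$ is a viscosity subsolution if $u(x)\le g(x)$ for all $x\in\mathbb{R}^N\setminus\Omega$ and, for every $x\in\Omega$, $\mathcal{A}(x,\varphi,u(x))\le0$ for all $\varphi\in\mathcal{X}$ with $\varphi\ge u$ on $\mathbb{R}^N$. A viscosity solution is a function $u\in\overline{\mathcal{X}}$ that is both a viscosity subsolution and a viscosity supersolution. *)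

theory Defs
  imports "HOL-Analysis.Analysis"
begin

text \<open>The space R^N is rendered as an arbitrary Euclidean space 'a.
  Xbar = bounded real functions on R^N.\<close>

definition Xbar :: "('a::euclidean_space \<Rightarrow> real) set" where
  "Xbar = {f. bounded (range f)}"

definition visc_super ::
  "'a::euclidean_space set \<Rightarrow> ('a \<Rightarrow> real) \<Rightarrow> ('a \<Rightarrow> real) set
   \<Rightarrow> ('a \<Rightarrow> ('a \<Rightarrow> real) \<Rightarrow> real \<Rightarrow> real) \<Rightarrow> ('a \<Rightarrow> real) \<Rightarrow> bool" where
  "visc_super \<Omega> g X A u \<longleftrightarrow>
     u \<in> Xbar \<and>
     (\<forall>x \<in> - \<Omega>. u x \<ge> g x) \<and>
     (\<forall>x \<in> \<Omega>. \<forall>\<phi> \<in> X. (\<forall>y. \<phi> y \<le> u y) \<longrightarrow> A x \<phi> (u x) \<ge> 0)"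

definition visc_sub ::
  "'a::euclidean_space set \<Rightarrow> ('a \<Rightarrow> real) \<Rightarrow> ('a \<Rightarrow> real) set
   \<Rightarrow> ('a \<Rightarrow> ('a \<Rightarrow> real) \<Rightarrow> real \<Rightarrow> real) \<Rightarrow> ('a \<Rightarrow> real) \<Rightarrow> bool" where
  "visc_sub \<Omega> g X A u \<longleftrightarrow>
     u \<in> Xbar \<and>
     (\<forall>x \<in> - \<Omega>. u x \<le> g x) \<and>
     (\<forall>x \<in> \<Omega>. \<forall>\<phi> \<in> X. (\<forall>y. \<phi> y \<ge> u y) \<longrightarrow> A x \<phi> (u x) \<le> 0)"

definition visc_sol ::
  "'a::euclidean_space set \<Rightarrow> ('a \<Rightarrow> real) \<Rightarrow> ('a \<Rightarrow> real) set
   \<Rightarrow> ('a \<Rightarrow> ('a \<Rightarrow> real) \<Rightarrow> real \<Rightarrow> real) \<Rightarrow> ('a \<Rightarrow> real) \<Rightarrow> bool" where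
  "visc_sol \<Omega> g X A u \<longleftrightarrow> visc_sub \<Omega> g X A u \<and> visc_super \<Omega> g X A u"

end

theory Submission
  imports Defs "HOL-Library.Function_Algebras"
begin

text \<open>Perron's method. The pointwise supremum \<open>u\<close> of all subsolutions is a subsolution:
  a test function \<open>\<phi> \<ge> u\<close> lies above every subsolution \<open>v\<close>, so each \<open>v x\<close> is bounded by
  the unique zero of the nondecreasing map \<open>s \<mapsto> A x \<phi> s\<close>, and hence so is \<open>u x\<close>.
  This greatest subsolution is also a supersolution. Outside \<open>\<Omega>\<close>, replacing \<open>u\<close> by \<open>g\<close>
  gives another subsolution, so \<open>g \<le> u\<close> there. Inside, if \<open>A x \<phi> (u x) < 0\<close> for some
  \<open>\<phi> \<le> u\<close>, then by (a) raising \<open>u x\<close> to the zero of \<open>A x \<phi>\<close> gives a strictly larger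
  subsolution, a contradiction. The case of supersolutions reduces to this one through
  \<open>u \<mapsto> -u\<close>, \<open>A x \<phi> s \<mapsto> - A x (-\<phi>) (-s)\<close>.\<close>

lemma Xbar_iff: "f \<in> Xbar \<longleftrightarrow> (\<exists>B. \<forall>y. \<bar>f y\<bar> \<le> B)"
  unfolding Xbar_def bounded_real by auto

lemma uminus_Xbar_iff [simp]: "- f \<in> Xbar \<longleftrightarrow> f \<in> Xbar"
  unfolding Xbar_iff by simp

lemma mono_le_unique_root:
  fixes f :: "'a::linorder \<Rightarrow> 'b::order"
  assumes "mono f" "\<exists>!s. f s = c" "f z = c" "f s \<le> c"
  shows "s \<le> z"
proof (rule ccontr)
  assume "\<not> s \<le> z"
  then have "f z \<le> f s" using \<open>mono f\<close> by (simp add: monoD)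
  then have "f s = c" using assms(3,4) by simp
  then show False using assms(2,3) \<open>\<not> s \<le> z\<close> by auto
qed

definition admissible_operator ::
  "'a set \<Rightarrow> ('a \<Rightarrow> real) set \<Rightarrow> ('a \<Rightarrow> ('a \<Rightarrow> real) \<Rightarrow> real \<Rightarrow> real) \<Rightarrow> bool" where
  "admissible_operator \<Omega> X A \<longleftrightarrow>
     (\<forall>x\<in>\<Omega>. \<forall>\<phi>\<in>X. \<forall>\<psi>\<in>X. \<phi> \<le> \<psi> \<longrightarrow> (\<forall>s. A x \<psi> s \<le> A x \<phi> s)) \<and>
     (\<forall>x\<in>\<Omega>. \<forall>\<phi>\<in>X. mono (A x \<phi>) \<and> (\<exists>!s. A x \<phi> s = 0))"

lemma admissible_operatorD:
  assumes "admissible_operator \<Omega> X A" "x \<in> \<Omega>" "\<phi> \<in> X"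
  shows admissible_operator_antimono_test: "\<psi> \<in> X \<Longrightarrow> \<phi> \<le> \<psi> \<Longrightarrow> A x \<psi> s \<le> A x \<phi> s"
    and admissible_operator_mono: "mono (A x \<phi>)"
    and admissible_operator_unique_root: "\<exists>!s. A x \<phi> s = 0"
  using assms unfolding admissible_operator_def by auto

lemma visc_sub_SUP:
  assumes adm: "admissible_operator \<Omega> X A"
    and "S \<noteq> {}"
    and sub: "\<And>v. v \<in> S \<Longrightarrow> visc_sub \<Omega> g X A v"
    and bdd: "\<And>v y. v \<in> S \<Longrightarrow> v y \<le> M"
  shows "visc_sub \<Omega> g X A (\<lambda>y. SUP v\<in>S. v y)" (is "visc_sub \<Omega> g X A ?u")
proof -
  have bdd_above: "bdd_above ((\<lambda>v. v y) ` S)" for y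
    using bdd by (auto intro!: bdd_aboveI)
  have upper: "v y \<le> ?u y" if "v \<in> S" for v y
    using that bdd_above by (rule cSUP_upper)
  have least: "?u y \<le> b" if "\<And>v. v \<in> S \<Longrightarrow> v y \<le> b" for y b
    using \<open>S \<noteq> {}\<close> that by (rule cSUP_least)
  obtain v0 where v0: "v0 \<in> S" using \<open>S \<noteq> {}\<close> by blast
  then obtain B where B: "\<And>y. \<bar>v0 y\<bar> \<le> B"
    using sub unfolding visc_sub_def Xbar_iff by blast
  have "\<bar>?u y\<bar> \<le> max B \<bar>M\<bar>" for y
    using upper[OF v0, of y] least[of y M] bdd B[of y] by fastforce
  then have "?u \<in> Xbar" unfolding Xbar_iff by blast
  moreover have "?u x \<le> g x" if "x \<in> - \<Omega>" for x
    using sub that by (intro least) (auto simp: visc_sub_def)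
  moreover have "A x \<phi> (?u x) \<le> 0" if x: "x \<in> \<Omega>" and \<phi>: "\<phi> \<in> X" and above: "?u \<le> \<phi>" for x \<phi>
  proof -
    obtain z where z: "A x \<phi> z = 0"
      using admissible_operator_unique_root[OF adm x \<phi>] by blast
    have "v x \<le> z" if "v \<in> S" for v
    proof (rule mono_le_unique_root[OF admissible_operator_mono[OF adm x \<phi>]
          admissible_operator_unique_root[OF adm x \<phi>] z])
      have "v \<le> \<phi>" using upper[OF that] above by (meson le_fun_def order_trans)
      then show "A x \<phi> (v x) \<le> 0" using sub[OF that] x \<phi> unfolding visc_sub_def le_fun_def by blast
    qed
    then have "A x \<phi> (?u x) \<le> A x \<phi> z"
      by (intro monoD[OF admissible_operator_mono[OF adm x \<phi>]] least)
    then show ?thesis using z by simp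
  qed
  ultimately show ?thesis unfolding visc_sub_def le_fun_def by blast
qed

lemma visc_sub_boundary_extension:
  assumes u: "visc_sub \<Omega> g X A u" and g_bdd: "bounded (g ` (- \<Omega>))"
  shows "visc_sub \<Omega> g X A (\<lambda>y. if y \<in> \<Omega> then u y else g y)" (is "visc_sub \<Omega> g X A ?w")
proof -
  obtain B where B: "\<And>y. \<bar>u y\<bar> \<le> B" using u unfolding visc_sub_def Xbar_iff by blast
  obtain Bg where Bg: "\<And>y. y \<in> - \<Omega> \<Longrightarrow> \<bar>g y\<bar> \<le> Bg" using g_bdd unfolding bounded_real by auto
  have "\<bar>?w y\<bar> \<le> max B Bg" for y using B[of y] Bg[of y] by auto
  then have "?w \<in> Xbar" unfolding Xbar_iff by blast
  moreover have "u \<le> ?w" using u unfolding visc_sub_def le_fun_def by auto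
  moreover have "A x \<psi> (?w x) \<le> 0" if x: "x \<in> \<Omega>" and \<psi>: "\<psi> \<in> X" "?w \<le> \<psi>" for x \<psi>
  proof -
    have "u \<le> \<psi>" using \<open>u \<le> ?w\<close> \<psi>(2) by (rule order_trans)
    then show ?thesis using u x \<psi>(1) unfolding visc_sub_def le_fun_def by auto
  qed
  ultimately show ?thesis
    using u unfolding visc_sub_def le_fun_def by auto
qed

lemma visc_sub_fun_upd:
  assumes adm: "admissible_operator \<Omega> X A"
    and u: "visc_sub \<Omega> g X A u"
    and x: "x \<in> \<Omega>" and \<phi>: "\<phi> \<in> X" "\<phi> \<le> u"
    and s: "u x \<le> s" "A x \<phi> s \<le> 0"
  shows "visc_sub \<Omega> g X A (u(x := s))"
proof -
  obtain B where B: "\<And>y. \<bar>u y\<bar> \<le> B" using u unfolding visc_sub_def Xbar_iff by blast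
  have "\<bar>(u(x := s)) y\<bar> \<le> max B \<bar>s\<bar>" for y using B[of y] by auto
  then have "u(x := s) \<in> Xbar" unfolding Xbar_iff by blast
  moreover have "A y \<psi> ((u(x := s)) y) \<le> 0"
    if y: "y \<in> \<Omega>" and \<psi>: "\<psi> \<in> X" "u(x := s) \<le> \<psi>" for y \<psi>
  proof -
    have "u \<le> \<psi>" using \<psi>(2) s(1) unfolding le_fun_def by (metis fun_upd_apply order_trans)
    show ?thesis
    proof (cases "y = x")
      case True
      have "A x \<psi> s \<le> A x \<phi> s"
        using \<phi> \<psi>(1) \<open>u \<le> \<psi>\<close> by (intro admissible_operator_antimono_test[OF adm x]) auto
      then show ?thesis using True s(2) by simp
    next
      case False
      then show ?thesis using u y \<psi>(1) \<open>u \<le> \<psi>\<close> unfolding visc_sub_def le_fun_def by auto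
    qed
  qed
  ultimately show ?thesis
    using u x unfolding visc_sub_def le_fun_def by auto
qed

lemma greatest_visc_sub_is_visc_sol:
  assumes adm: "admissible_operator \<Omega> X A" and g_bdd: "bounded (g ` (- \<Omega>))"
    and u: "visc_sub \<Omega> g X A u"
    and greatest: "\<And>w. visc_sub \<Omega> g X A w \<Longrightarrow> w \<le> u"
  shows "visc_sol \<Omega> g X A u"
proof -
  have "g x \<le> u x" if "x \<in> - \<Omega>" for x
    using le_funD[OF greatest[OF visc_sub_boundary_extension[OF u g_bdd]], of x] that by simp
  moreover have "0 \<le> A x \<phi> (u x)" if x: "x \<in> \<Omega>" and \<phi>: "\<phi> \<in> X" "\<phi> \<le> u" for x \<phi>
  proof (rule ccontr)
    assume "\<not> 0 \<le> A x \<phi> (u x)"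
    obtain z where z: "A x \<phi> z = 0"
      using admissible_operator_unique_root[OF adm x \<phi>(1)] by blast
    have "u x < z"
      using \<open>\<not> 0 \<le> A x \<phi> (u x)\<close> z monoD[OF admissible_operator_mono[OF adm x \<phi>(1)], of z "u x"]
      by fastforce
    then have "visc_sub \<Omega> g X A (u(x := z))"
      using z by (intro visc_sub_fun_upd[OF adm u x \<phi>]) auto
    from greatest[OF this] have "z \<le> u x" by (auto simp: le_fun_def dest: spec[of _ x])
    then show False using \<open>u x < z\<close> by simp
  qed
  ultimately show ?thesis
    using u unfolding visc_sol_def visc_super_def visc_sub_def le_fun_def by blast
qed

lemma perron_visc_sol_exists:
  assumes adm: "admissible_operator \<Omega> X A" and g_bdd: "bounded (g ` (- \<Omega>))"
    and v0: "visc_sub \<Omega> g X A v0"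
    and bdd: "\<And>v y. visc_sub \<Omega> g X A v \<Longrightarrow> v y \<le> M"
  shows "\<exists>u. visc_sol \<Omega> g X A u"
proof
  let ?S = "Collect (visc_sub \<Omega> g X A)"
  let ?u = "\<lambda>y. SUP v\<in>?S. v y"
  show "visc_sol \<Omega> g X A ?u"
  proof (rule greatest_visc_sub_is_visc_sol[OF adm g_bdd])
    show "visc_sub \<Omega> g X A ?u"
      using v0 bdd by (intro visc_sub_SUP[OF adm]) auto
    show "w \<le> ?u" if "visc_sub \<Omega> g X A w" for w
      unfolding le_fun_def using that bdd by (auto intro!: cSUP_upper bdd_aboveI)
  qed
qed

definition mirror_operator ::
  "('a \<Rightarrow> ('a \<Rightarrow> real) \<Rightarrow> real \<Rightarrow> real) \<Rightarrow> 'a \<Rightarrow> ('a \<Rightarrow> real) \<Rightarrow> real \<Rightarrow> real" where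
  "mirror_operator A = (\<lambda>x \<psi> s. - A x (- \<psi>) (- s))"

lemma admissible_operator_mirror:
  assumes adm: "admissible_operator \<Omega> X A"
  shows "admissible_operator \<Omega> (uminus ` X) (mirror_operator A)"
  unfolding admissible_operator_def
proof (intro conjI ballI allI impI)
  fix x \<phi> assume x: "x \<in> \<Omega>" and "\<phi> \<in> uminus ` X"
  then have \<phi>: "- \<phi> \<in> X" by force
  show "mono (mirror_operator A x \<phi>)"
  proof (rule monoI)
    fix s t :: real assume "s \<le> t"
    then have "A x (- \<phi>) (- t) \<le> A x (- \<phi>) (- s)"
      by (intro monoD[OF admissible_operator_mono[OF adm x \<phi>]]) simp
    then show "mirror_operator A x \<phi> s \<le> mirror_operator A x \<phi> t"
      by (simp add: mirror_operator_def)
  qed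
  obtain z where z: "A x (- \<phi>) z = 0" and unique: "\<And>t. A x (- \<phi>) t = 0 \<Longrightarrow> t = z"
    using admissible_operator_unique_root[OF adm x \<phi>] by blast
  show "\<exists>!s. mirror_operator A x \<phi> s = 0"
  proof (rule ex1I[of _ "- z"])
    show "mirror_operator A x \<phi> (- z) = 0" using z by (simp add: mirror_operator_def)
    show "t = - z" if "mirror_operator A x \<phi> t = 0" for t
      using unique[of "- t"] that by (simp add: mirror_operator_def)
  qed
next
  fix x \<phi> \<psi> s assume x: "x \<in> \<Omega>" and "\<phi> \<in> uminus ` X" "\<psi> \<in> uminus ` X" "\<phi> \<le> \<psi>"
  then have "A x (- \<phi>) (- s) \<le> A x (- \<psi>) (- s)"
    by (intro admissible_operator_antimono_test[OF adm x]) force+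
  then show "mirror_operator A x \<psi> s \<le> mirror_operator A x \<phi> s"
    by (simp add: mirror_operator_def)
qed

lemma visc_sub_mirror_iff:
  "visc_sub \<Omega> (- g) (uminus ` X) (mirror_operator A) v \<longleftrightarrow> visc_super \<Omega> g X A (- v)"
  unfolding visc_sub_def visc_super_def mirror_operator_def
  by (simp del: Compl_iff add: le_minus_iff minus_le_iff)

lemma visc_super_mirror_iff:
  "visc_super \<Omega> (- g) (uminus ` X) (mirror_operator A) v \<longleftrightarrow> visc_sub \<Omega> g X A (- v)"
  unfolding visc_sub_def visc_super_def mirror_operator_def
  by (simp del: Compl_iff add: le_minus_iff minus_le_iff)

lemma visc_sol_mirror_iff:
  "visc_sol \<Omega> (- g) (uminus ` X) (mirror_operator A) v \<longleftrightarrow> visc_sol \<Omega> g X A (- v)"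
  unfolding visc_sol_def visc_sub_mirror_iff visc_super_mirror_iff by blast

lemma perron_visc_sol_exists_from_super:
  assumes adm: "admissible_operator \<Omega> X A" and g_bdd: "bounded (g ` (- \<Omega>))"
    and v0: "visc_super \<Omega> g X A v0"
    and bdd: "\<And>v y. visc_super \<Omega> g X A v \<Longrightarrow> M \<le> v y"
  shows "\<exists>u. visc_sol \<Omega> g X A u"
proof -
  have "\<exists>u. visc_sol \<Omega> (- g) (uminus ` X) (mirror_operator A) u"
  proof (rule perron_visc_sol_exists[OF admissible_operator_mirror[OF adm]])
    show "bounded ((- g) ` (- \<Omega>))"
      using bounded_uminus[of "g ` (- \<Omega>)"] g_bdd by (simp add: image_image)
    show "visc_sub \<Omega> (- g) (uminus ` X) (mirror_operator A) (- v0)"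
      using v0 by (simp add: visc_sub_mirror_iff)
    show "v y \<le> - M" if "visc_sub \<Omega> (- g) (uminus ` X) (mirror_operator A) v" for v y
      using bdd[of "- v" y] that by (simp add: visc_sub_mirror_iff)
  qed
  then show ?thesis using visc_sol_mirror_iff by blast
qed

theorem mainTheorem1:
  fixes \<Omega> :: "'a::euclidean_space set"
    and g :: "'a \<Rightarrow> real"
    and X :: "('a \<Rightarrow> real) set"
    and A :: "'a \<Rightarrow> ('a \<Rightarrow> real) \<Rightarrow> real \<Rightarrow> real"
  assumes dom: "open \<Omega>" "connected \<Omega>"
    and g_bdd: "bounded (g ` (- \<Omega>))"
    and X_sub: "X \<subseteq> Xbar"
    and A_a: "\<And>x \<phi>1 \<phi>2 s. x \<in> \<Omega> \<Longrightarrow> \<phi>1 \<in> X \<Longrightarrow> \<phi>2 \<in> X \<Longrightarrow>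
                 (\<forall>y. \<phi>1 y \<le> \<phi>2 y) \<Longrightarrow> A x \<phi>2 s \<le> A x \<phi>1 s"
    and A_b: "\<And>x \<phi> s1 s2. x \<in> \<Omega> \<Longrightarrow> \<phi> \<in> X \<Longrightarrow> s1 \<le> s2 \<Longrightarrow>
                 A x \<phi> s1 \<le> A x \<phi> s2"
    and A_c: "\<And>x \<phi>. x \<in> \<Omega> \<Longrightarrow> \<phi> \<in> X \<Longrightarrow> \<exists>!s. A x \<phi> s = 0"
    and H: "((\<exists>v. visc_sub \<Omega> g X A v) \<and>
              (\<exists>M::real. \<forall>v. visc_sub \<Omega> g X A v \<longrightarrow> (\<forall>y. v y \<le> M)))
          \<or> ((\<exists>v. visc_super \<Omega> g X A v) \<and>
              (\<exists>M::real. \<forall>v. visc_super \<Omega> g X A v \<longrightarrow> (\<forall>y. M \<le> v y)))"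
  shows "\<exists>u. visc_sol \<Omega> g X A u"
proof -
  have adm: "admissible_operator \<Omega> X A"
    unfolding admissible_operator_def mono_def le_fun_def using A_a A_b A_c by blast
  from H show ?thesis
  proof (elim disjE conjE exE)
    fix v0 M assume "visc_sub \<Omega> g X A v0" "\<forall>v. visc_sub \<Omega> g X A v \<longrightarrow> (\<forall>y. v y \<le> M)"
    then show ?thesis using perron_visc_sol_exists[OF adm g_bdd] by blast
  next
    fix v0 M assume "visc_super \<Omega> g X A v0" "\<forall>v. visc_super \<Omega> g X A v \<longrightarrow> (\<forall>y. M \<le> v y)"
    then show ?thesis using perron_visc_sol_exists_from_super[OF adm g_bdd] by blast
  qed
qed

end
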